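(* Let $a,b$ be integers with $0<b<a$, let $S=\langle a,a+1,\ldots,a+b\rangle$ with conductor $c$, and let $m\ge 2c-1$. Let $0=i_0<i_1<\cdots<i_t<i_{t+1}<a+b$ be integers such that $\{m,m+i_1,\ldots,m+i_{t+1}\}$ is amenable. Then $$\mathrm D(m,m+i_1,\ldots,m+i_{t+1})=\mathrm D(m,m+i_1,\ldots,m+i_t)\cup\{m-(ka+r)\mid a-i_{t+1}\le r\le a-1-i_t,\ 0<r-kb\le (a+b)-i_{t+1}\},$$ where $k,r$ range over integers.
   Context: The conductor $c$ of a numerical semigroup $S$ is the least element of $S$ with $c+n\in S$ for all $n\in\mathbb N$. For $x\in S$, $\mathrm D(x)=\{\alpha\in S\mid x-\alpha\in S\}$, and $\mathrm D(x_1,\ldots,x_t)=\mathrm D(x_1)\cup\cdots\cup\mathrm D(x_t)$. A set $M=\{m_1<\cdots<m_s\}\subseteq S$ with $2c-1\le m=m_1$ is amenable if $\mathrm D(m_i)\cap[m,\infty)\subseteq M$ for all $i$. *)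

theory Defs
  imports Main
begin

inductive_set semigroup_gen :: "int set \<Rightarrow> int set" for G :: "int set" where
  zero: "0 \<in> semigroup_gen G"
| add: "g \<in> G \<Longrightarrow> x \<in> semigroup_gen G \<Longrightarrow> g + x \<in> semigroup_gen G"

definition conductor :: "int set \<Rightarrow> int" where
  "conductor S = (LEAST c. c \<in> S \<and> (\<forall>n::nat. c + int n \<in> S))"

definition Dv :: "int set \<Rightarrow> int \<Rightarrow> int set" where
  "Dv S x = {\<alpha>. \<alpha> \<in> S \<and> x - \<alpha> \<in> S}"

definition Dset :: "int set \<Rightarrow> int set \<Rightarrow> int set" where
  "Dset S X = (\<Union>x\<in>X. Dv S x)"

definition amenable :: "int set \<Rightarrow> int set \<Rightarrow> bool" where
  "amenable S M \<longleftrightarrow> finite M \<and> M \<noteq> {} \<and> M \<subseteq> S \<and> 2 * conductor S - 1 \<le> Min M \<and>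
     (\<forall>x\<in>M. Dv S x \<inter> {Min M..} \<subseteq> M)"

end

theory Submission
  imports Defs
begin

text \<open>
  Membership in \<open>S = \<langle>a, \<dots>, a + b\<rangle>\<close> is decided by layers: \<open>x \<in> S\<close> iff
  \<open>n a \<le> x \<le> n (a + b)\<close> for some \<open>n \<ge> 0\<close>. Write an element of \<open>D(m + i\<^sub>t\<^sub>+\<^sub>1)\<close> as
  \<open>m - x\<close>. If \<open>m - x\<close> is new, i.e. lies in no \<open>D(m + i\<^sub>j)\<close> with \<open>j \<le> t\<close>, then
  \<open>x \<notin> S\<close>, \<open>x + i\<^sub>t \<notin> S\<close> and \<open>x + i\<^sub>t\<^sub>+\<^sub>1 \<in> S\<close>; with \<open>k + 1\<close> the layer of \<open>x + i\<^sub>t\<^sub>+\<^sub>1\<close> and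
  \<open>r = x - k a\<close>, this gives every inequality of the window except \<open>r > k b\<close>. That one is
  where amenability enters: if \<open>x \<le> k (a + b)\<close>, then \<open>u = k a - x\<close> makes \<open>m + u\<close> a divisor
  of \<open>m + i\<^sub>t\<^sub>+\<^sub>1\<close> above \<open>m\<close>, hence \<open>u = i\<^sub>j\<close> with \<open>j \<le> t\<close>, and \<open>m - x\<close> divides \<open>m + i\<^sub>j\<close>.
  Conversely every \<open>x\<close> in the window lies below the conductor \<open>c\<close>, so \<open>m - x \<ge> c\<close>
  because \<open>m \<ge> 2c - 1\<close>.
\<close>

lemma semigroup_gen_interval_iff:
  fixes a b x :: int
  assumes "0 \<le> a" "0 \<le> b"
  shows "x \<in> semigroup_gen {a..a+b} \<longleftrightarrow> (\<exists>n\<ge>0. n * a \<le> x \<and> x \<le> n * (a + b))"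
proof
  assume "x \<in> semigroup_gen {a..a+b}"
  then show "\<exists>n\<ge>0. n * a \<le> x \<and> x \<le> n * (a + b)"
  proof (induction rule: semigroup_gen.induct)
    case zero
    show ?case by (intro exI[of _ 0]) simp
  next
    case (add g x)
    then obtain n where "0 \<le> n" "n * a \<le> x" "x \<le> n * (a + b)" by blast
    with add.hyps(1) show ?case by (intro exI[of _ "n + 1"]) (auto simp: algebra_simps)
  qed
next
  assume "\<exists>n\<ge>0. n * a \<le> x \<and> x \<le> n * (a + b)"
  then obtain n where "0 \<le> n" "n * a \<le> x" "x \<le> n * (a + b)" by blast
  moreover have "\<forall>x. n * a \<le> x \<and> x \<le> n * (a + b) \<longrightarrow> x \<in> semigroup_gen {a..a+b}"
    using \<open>0 \<le> n\<close>
  proof (induction n rule: int_ge_induct)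
    case base
    show ?case by (auto intro: semigroup_gen.zero)
  next
    case (step n)
    show ?case
    proof (intro allI impI)
      fix x assume x: "(n + 1) * a \<le> x \<and> x \<le> (n + 1) * (a + b)"
      define g where "g = min (a + b) (x - n * a)"
      have "0 \<le> n * b" using step.hyps assms by simp
      then have "g \<in> {a..a+b}" and "n * a \<le> x - g \<and> x - g \<le> n * (a + b)"
        using x assms unfolding g_def by (auto simp: algebra_simps)
      then have "g + (x - g) \<in> semigroup_gen {a..a+b}"
        using step.IH by (blast intro: semigroup_gen.add)
      then show "x \<in> semigroup_gen {a..a+b}" by simp
    qed
  qed
  ultimately show "x \<in> semigroup_gen {a..a+b}" by blast
qed

lemma not_mem_semigroup_gen_interval:
  fixes a b n x :: int
  assumes "0 \<le> a" "0 \<le> b" "n * (a + b) < x" "x < (n + 1) * a"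
  shows "x \<notin> semigroup_gen {a..a+b}"
proof
  assume "x \<in> semigroup_gen {a..a+b}"
  then obtain n' where n': "n' * a \<le> x" "x \<le> n' * (a + b)"
    using semigroup_gen_interval_iff assms(1,2) by blast
  show False
  proof (cases "n' \<le> n")
    case True
    then have "n' * (a + b) \<le> n * (a + b)" using assms(1,2) by (simp add: mult_right_mono)
    then show False using n' assms(3) by simp
  next
    case False
    then have "(n + 1) * a \<le> n' * a" using assms(1) by (simp add: mult_right_mono)
    then show False using n' assms(4) by simp
  qed
qed

lemma semigroup_gen_interval_nonneg:
  fixes a b x :: int
  assumes "0 \<le> a" "0 \<le> b" "x \<in> semigroup_gen {a..a+b}"
  shows "0 \<le> x"
  using assms semigroup_gen_interval_iff by (meson mult_nonneg_nonneg order_trans)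

lemma semigroup_gen_interval_tail:
  fixes a b y :: int
  assumes "0 < a" "0 < b" "a * a \<le> y"
  shows "y \<in> semigroup_gen {a..a+b}"
proof -
  define n where "n = y div a"
  have "a \<le> n"
    using zdiv_mono1[OF assms(3) assms(1)] assms(1) unfolding n_def by simp
  have "a * 1 \<le> n * b"
    using \<open>a \<le> n\<close> assms by (intro mult_mono) auto
  moreover have "n * a \<le> y" "y < n * a + a"
    using assms(1) div_mult_mod_eq[of y a] pos_mod_bound[of a y] pos_mod_sign[of a y]
    unfolding n_def by linarith+
  ultimately have "n * a \<le> y" "y \<le> n * (a + b)"
    by (simp_all add: distrib_left)
  moreover have "0 \<le> n" using \<open>a \<le> n\<close> assms(1) by simp
  ultimately show ?thesis
    using semigroup_gen_interval_iff[of a b y] assms by auto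
qed

lemma conductor_le_imp_mem:
  fixes S :: "int set" and N y :: int
  assumes nonneg: "\<And>x. x \<in> S \<Longrightarrow> 0 \<le> x"
    and tail: "\<And>x. N \<le> x \<Longrightarrow> x \<in> S"
    and "conductor S \<le> y"
  shows "y \<in> S"
proof -
  define P where "P c \<longleftrightarrow> c \<in> S \<and> (\<forall>n::nat. c + int n \<in> S)" for c
  \<comment> \<open>\<open>P\<close> holds only at non-negative integers, so its least witness is found over \<open>nat\<close>.\<close>
  define n\<^sub>0 where "n\<^sub>0 = (LEAST n::nat. P (int n))"
  have "P (max N 0)"
    unfolding P_def using tail by simp
  then have "P (int (nat (max N 0)))" by simp
  then have P_n\<^sub>0: "P (int n\<^sub>0)"
    unfolding n\<^sub>0_def by (rule LeastI)
  have "int n\<^sub>0 \<le> c" if "P c" for c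
  proof -
    have "0 \<le> c" using that nonneg unfolding P_def by blast
    with that have "n\<^sub>0 \<le> nat c"
      unfolding n\<^sub>0_def by (intro Least_le) simp
    with \<open>0 \<le> c\<close> show ?thesis by simp
  qed
  then have "conductor S = int n\<^sub>0"
    unfolding conductor_def P_def[symmetric] using P_n\<^sub>0 by (intro Least_equality) auto
  then have "P (conductor S)" using P_n\<^sub>0 by simp
  moreover have "y = conductor S + int (nat (y - conductor S))"
    using \<open>conductor S \<le> y\<close> by simp
  ultimately show ?thesis unfolding P_def by metis
qed

lemma semigroup_gen_interval_conductor_le_imp_mem:
  fixes a b y :: int
  assumes "0 < a" "0 < b" "conductor (semigroup_gen {a..a+b}) \<le> y"
  shows "y \<in> semigroup_gen {a..a+b}"
proof (rule conductor_le_imp_mem[where N = "a * a"])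
  show "0 \<le> x" if "x \<in> semigroup_gen {a..a+b}" for x
    using semigroup_gen_interval_nonneg[OF _ _ that] assms by simp
  show "x \<in> semigroup_gen {a..a+b}" if "a * a \<le> x" for x
    using semigroup_gen_interval_tail[OF _ _ that] assms by simp
qed (use assms in simp)

lemma semigroup_gen_interval_conductor_ge:
  fixes a b :: int
  assumes "1 < a" "0 < b"
  shows "a \<le> conductor (semigroup_gen {a..a+b})"
proof -
  have "a - 1 \<notin> semigroup_gen {a..a+b}"
    using not_mem_semigroup_gen_interval[of a b 0 "a - 1"] assms by simp
  then show ?thesis
    using semigroup_gen_interval_conductor_le_imp_mem[of a b "a - 1"] assms by fastforce
qed

lemma Dset_insert: "Dset S (insert x X) = Dv S x \<union> Dset S X"
  by (simp add: Dset_def)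

lemma amenable_Dv_inter_atLeast_subset:
  assumes "amenable S M" "x \<in> M" "y \<in> M"
  shows "Dv S x \<inter> {y..} \<subseteq> M"
proof -
  have "Min M \<le> y" using assms(1,3) unfolding amenable_def by simp
  moreover have "Dv S x \<inter> {Min M..} \<subseteq> M" using assms(1,2) unfolding amenable_def by blast
  ultimately show ?thesis by auto
qed

lemma zero_le_if_increasing_from_zero:
  fixes f :: "nat \<Rightarrow> int"
  assumes "f 0 = 0" "\<And>j. j < n \<Longrightarrow> f j < f (Suc j)"
  shows "0 \<le> f n"
  using assms(2)
proof (induction n)
  case (Suc n)
  then have "0 \<le> f n" by simp
  with Suc.prems[of n] show ?case by simp
qed (use assms(1) in simp)

text \<open>The new divisors are the \<open>m - x\<close> with \<open>x \<in> offset_window a b i\<^sub>t i\<^sub>t\<^sub>+\<^sub>1\<close>.\<close>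

definition offset_window :: "int \<Rightarrow> int \<Rightarrow> int \<Rightarrow> int \<Rightarrow> int set" where
  "offset_window a b p q = {k * a + r | k r. a - q \<le> r \<and> r \<le> a - 1 - p \<and>
     0 < r - k * b \<and> r - k * b \<le> a + b - q}"

lemma neg_mem_offset_window:
  fixes a b p q :: int
  assumes "p < q" "q < a + b"
  shows "- q \<in> offset_window a b p q"
  unfolding offset_window_def using assms
  by (intro CollectI exI[of _ "-1"] exI[of _ "a - q"]) auto

lemma offset_window_add_mem:
  fixes a b p q x :: int
  assumes "0 \<le> a" "0 < b" "x \<in> offset_window a b p q"
  shows "x + q \<in> semigroup_gen {a..a+b}"
proof -
  obtain k r where x: "x = k * a + r" and r: "a - q \<le> r" "0 < r - k * b" "r - k * b \<le> a + b - q"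
    using assms(3) unfolding offset_window_def by blast
  have "-1 \<le> k"
  proof (rule ccontr)
    assume "\<not> -1 \<le> k"
    then have "2 * b \<le> (- k) * b" using assms(2) by (intro mult_right_mono) auto
    then show False using r assms(2) by simp
  qed
  moreover have "(k + 1) * a \<le> x + q" "x + q \<le> (k + 1) * (a + b)"
    using x r by (simp_all add: algebra_simps)
  ultimately show ?thesis
    using semigroup_gen_interval_iff[of a b] assms(1,2) by (auto intro!: exI[of _ "k + 1"])
qed

lemma offset_window_less_conductor:
  fixes a b p q x :: int
  assumes "0 < a" "0 < b" "0 \<le> p" "x \<in> offset_window a b p q"
  shows "x < conductor (semigroup_gen {a..a+b})"
proof -
  obtain k r where x: "x = k * a + r" and r: "r \<le> a - 1 - p" "0 < r - k * b"
    using assms(4) unfolding offset_window_def by blast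
  have "(k + 1) * a - 1 \<notin> semigroup_gen {a..a+b}"
    using assms r by (intro not_mem_semigroup_gen_interval[of _ _ k]) (auto simp: algebra_simps)
  then have "(k + 1) * a - 1 < conductor (semigroup_gen {a..a+b})"
    using semigroup_gen_interval_conductor_le_imp_mem[OF assms(1,2)] not_less by blast
  moreover have "x \<le> (k + 1) * a - 1" using x r assms(3) by (simp add: algebra_simps)
  ultimately show ?thesis by simp
qed

lemma mem_offset_window_if_gaps:
  fixes a b p q x :: int and S :: "int set"
  assumes "0 < a" "0 < b" and S: "S = semigroup_gen {a..a+b}"
    and "0 < x" "x \<notin> S" "x + p \<notin> S" "x + q \<in> S" "p \<le> q" "q < a + b"
    \<comment> \<open>What amenability provides: such \<open>m + u\<close> divides \<open>m + q\<close>, so \<open>u\<close> is an earlier offset.\<close>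
    and shifted_gaps: "\<And>u. 0 < u \<Longrightarrow> u < q \<Longrightarrow> q - u \<in> S \<Longrightarrow> x + u \<notin> S"
  shows "x \<in> offset_window a b p q"
proof -
  have mem: "y \<in> S \<longleftrightarrow> (\<exists>n\<ge>0. n * a \<le> y \<and> y \<le> n * (a + b))" for y
    using S semigroup_gen_interval_iff assms(1,2) by simp
  obtain n where n: "0 \<le> n" "n * a \<le> x + q" "x + q \<le> n * (a + b)"
    using mem \<open>x + q \<in> S\<close> by blast
  have "x + p < n * a"
    using mem[of "x + p"] n \<open>x + p \<notin> S\<close> \<open>p \<le> q\<close> by force
  have "(n - 1) * (a + b) < x"
  proof (rule ccontr)
    assume "\<not> (n - 1) * (a + b) < x"
    then have x_le: "x \<le> (n - 1) * (a + b)" by simp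
    then have "1 \<le> n"
      using \<open>0 < x\<close> assms(1,2) mult_nonpos_nonneg[of "n - 1" "a + b"] by linarith
    have "0 \<le> (n - 1) * b" using \<open>1 \<le> n\<close> assms(2) by simp
    then have "(n - 1) * a \<in> S"
      using mem \<open>1 \<le> n\<close> by (auto simp: algebra_simps intro!: exI[of _ "n - 1"])
    have "x < (n - 1) * a"
    proof (rule ccontr)
      assume "\<not> x < (n - 1) * a"
      then have "x \<in> S" using mem[of x] x_le \<open>1 \<le> n\<close> by force
      with \<open>x \<notin> S\<close> show False ..
    qed
    define u where "u = (n - 1) * a - x"
    have "a \<le> q - u" "q - u \<le> a + b"
      using n(2) \<open>x < (n - 1) * a\<close> \<open>q < a + b\<close> unfolding u_def by (simp_all add: algebra_simps)
    then have "q - u \<in> S"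
      using mem by (auto intro!: exI[of _ 1])
    moreover have "0 < u" "u < q"
      using \<open>x < (n - 1) * a\<close> \<open>a \<le> q - u\<close> assms(1) unfolding u_def by simp_all
    ultimately have "x + u \<notin> S" by (rule shifted_gaps[rotated 2])
    then show False using \<open>(n - 1) * a \<in> S\<close> unfolding u_def by simp
  qed
  then show ?thesis
    unfolding offset_window_def using n \<open>x + p < n * a\<close>
    by (intro CollectI exI[of _ "n - 1"] exI[of _ "x - (n - 1) * a"]) (simp add: algebra_simps)
qed

lemma Dv_subset_Dset_Un_offset_window:
  fixes a b m p q :: int and I S :: "int set"
  assumes "0 < a" "0 < b" and S: "S = semigroup_gen {a..a+b}"
    and "conductor S \<le> m" "0 \<in> I" "p \<in> I" "p < q" "q < a + b"
    and amenable: "Dv S (m + q) \<inter> {m..} \<subseteq> (+) m ` insert q I"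
  shows "Dv S (m + q) \<subseteq> Dset S ((+) m ` I) \<union> (\<lambda>x. m - x) ` offset_window a b p q"
proof
  fix \<alpha> assume \<alpha>: "\<alpha> \<in> Dv S (m + q)"
  show "\<alpha> \<in> Dset S ((+) m ` I) \<union> (\<lambda>x. m - x) ` offset_window a b p q"
  proof (cases "\<alpha> \<in> Dset S ((+) m ` I)")
    case True
    then show ?thesis ..
  next
    case False
    then have new: "\<alpha> \<notin> Dv S (m + j)" if "j \<in> I" for j
      using that unfolding Dset_def by blast
    have "\<alpha> \<in> S" "m + q - \<alpha> \<in> S" using \<alpha> unfolding Dv_def by auto
    have "0 \<in> S" unfolding S by (rule semigroup_gen.zero)
    have "m - \<alpha> \<in> offset_window a b p q"
    proof (cases "m \<le> \<alpha>")
      case True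
      then obtain j where "j \<in> insert q I" "\<alpha> = m + j" using amenable \<alpha> by blast
      moreover have "\<alpha> \<in> Dv S \<alpha>" using \<open>\<alpha> \<in> S\<close> \<open>0 \<in> S\<close> unfolding Dv_def by simp
      ultimately have "\<alpha> = m + q" using new by blast
      then show ?thesis using neg_mem_offset_window assms(7,8) by simp
    next
      case False
      show ?thesis
      proof (rule mem_offset_window_if_gaps[OF assms(1,2) S])
        show "0 < m - \<alpha>" using False by simp
        show "m - \<alpha> \<notin> S" "m - \<alpha> + p \<notin> S"
          using new[OF \<open>0 \<in> I\<close>] new[OF \<open>p \<in> I\<close>] \<open>\<alpha> \<in> S\<close> unfolding Dv_def by (auto simp: algebra_simps)
        show "m - \<alpha> + q \<in> S" using \<open>m + q - \<alpha> \<in> S\<close> by (simp add: algebra_simps)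
        show "p \<le> q" "q < a + b" using assms(7,8) by simp_all
      next
        fix u assume u: "0 < u" "u < q" "q - u \<in> S"
        have "m + u \<in> S"
          using semigroup_gen_interval_conductor_le_imp_mem[OF assms(1,2)] S \<open>conductor S \<le> m\<close> u(1)
          by simp
        with u(3) have "m + u \<in> Dv S (m + q) \<inter> {m..}"
          using u(1) unfolding Dv_def by simp
        then have "u \<in> I" using amenable u(2) by auto
        then have "m + u - \<alpha> \<notin> S"
          using new[of u] \<open>\<alpha> \<in> S\<close> unfolding Dv_def by simp
        then show "m - \<alpha> + u \<notin> S" by (metis diff_add_eq)
      qed
    qed
    then have "\<alpha> \<in> (\<lambda>x. m - x) ` offset_window a b p q"
      by (rule rev_image_eqI) simp
    then show ?thesis ..
  qed
qed

lemma offset_window_subset_Dv: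
  fixes a b m p q :: int and S :: "int set"
  assumes "0 < a" "0 < b" and S: "S = semigroup_gen {a..a+b}"
    and "2 * conductor S - 1 \<le> m" "0 \<le> p"
  shows "(\<lambda>x. m - x) ` offset_window a b p q \<subseteq> Dv S (m + q)"
proof clarify
  fix x assume x: "x \<in> offset_window a b p q"
  have "x < conductor S"
    using offset_window_less_conductor[OF assms(1,2,5) x] S by simp
  then have "m - x \<in> S"
    using semigroup_gen_interval_conductor_le_imp_mem[OF assms(1,2)] S assms(4) by simp
  moreover have "m + q - (m - x) \<in> S"
    using offset_window_add_mem[OF _ assms(2) x] assms(1) S by (simp add: add.commute)
  ultimately show "m - x \<in> Dv S (m + q)" unfolding Dv_def by simp
qed

lemma Dset_insert_offset:
  fixes a b m p q :: int and I S :: "int set"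
  assumes "0 < a" "0 < b" and S: "S = semigroup_gen {a..a+b}"
    and "2 * conductor S - 1 \<le> m" "conductor S \<le> m"
    and "0 \<in> I" "p \<in> I" "0 \<le> p" "p < q" "q < a + b"
    and "Dv S (m + q) \<inter> {m..} \<subseteq> (+) m ` insert q I"
  shows "Dset S ((+) m ` insert q I) = Dset S ((+) m ` I) \<union> (\<lambda>x. m - x) ` offset_window a b p q"
  using Dv_subset_Dset_Un_offset_window[OF assms(1-3,5-7,9-11)] offset_window_subset_Dv[OF assms(1-4,8)]
  unfolding image_insert Dset_insert by blast

theorem lemma4p4:
  fixes a b m :: int and t :: nat and i :: "nat \<Rightarrow> int"
  assumes "0 < b" and "b < a"
    and "S = semigroup_gen {a..a+b}"
    and "m \<ge> 2 * conductor S - 1"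
    and "i 0 = 0"
    and "\<And>j. j \<le> t \<Longrightarrow> i j < i (Suc j)"
    and "i (Suc t) < a + b"
    and "amenable S ((\<lambda>j. m + i j) ` {0..Suc t})"
  shows "Dset S ((\<lambda>j. m + i j) ` {0..Suc t}) =
           Dset S ((\<lambda>j. m + i j) ` {0..t}) \<union>
           {m - (k * a + r) | k r. a - i (Suc t) \<le> r \<and> r \<le> a - 1 - i t \<and>
                0 < r - k * b \<and> r - k * b \<le> (a + b) - i (Suc t)}"
proof -
  define q where "q = i (Suc t)"
  define I where "I = i ` {0..t}"
  have images: "(\<lambda>j. m + i j) ` {0..Suc t} = (+) m ` insert q I"
    "(\<lambda>j. m + i j) ` {0..t} = (+) m ` I"
    unfolding I_def q_def by (simp_all add: atLeast0_atMost_Suc image_image)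
  have "0 < a" using assms(1,2) by simp
  have "0 \<le> i t" using zero_le_if_increasing_from_zero[of i t] assms(5,6) by simp
  have "conductor S \<le> m"
    using semigroup_gen_interval_conductor_ge[of a b] assms(1-4) by simp
  have offsets: "0 \<in> I" "i t \<in> I" "i t < q" "q < a + b"
    unfolding I_def q_def using assms(5-7) by (force intro: image_eqI[of 0])+
  then have "m + q \<in> (+) m ` insert q I" "m \<in> (+) m ` insert q I" by force+
  then have "Dv S (m + q) \<inter> {m..} \<subseteq> (+) m ` insert q I"
    by (rule amenable_Dv_inter_atLeast_subset[OF assms(8)[unfolded images]])
  then have "Dset S ((+) m ` insert q I) =
      Dset S ((+) m ` I) \<union> (\<lambda>x. m - x) ` offset_window a b (i t) q"
    by (rule Dset_insert_offset[OF \<open>0 < a\<close> assms(1,3,4) \<open>conductor S \<le> m\<close> offsets(1,2)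
          \<open>0 \<le> i t\<close> offsets(3,4)])
  moreover have "{m - (k * a + r) | k r. a - q \<le> r \<and> r \<le> a - 1 - i t \<and>
      0 < r - k * b \<and> r - k * b \<le> (a + b) - q} = (\<lambda>x. m - x) ` offset_window a b (i t) q"
    unfolding offset_window_def by blast
  ultimately show ?thesis
    unfolding images q_def[symmetric] by simp
qed

end
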